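(* $\chi_{alg}(K_j)=j$ for $j=2,3,4$.
   Context: Graphs are finite, loopless, with symmetric edge sets; $K_c$ is the complete graph on $c$ vertices. For finite sets with $|I|=n$, $|O|=m$ ($O=\{0,\dots,m-1\}$), let $\mathbb F(n,m)$ be the free product of $n$ copies of the cyclic group of order $m$ with generators $u_v$, $\mathbb C[\mathbb F(n,m)]$ its group $*$-algebra, $\omega=e^{2\pi i/m}$ and $e_{v,a}=\frac1m\sum_{k=0}^{m-1}(\omega^{-a}u_v)^k$. For graphs $G,H$, the graph homomorphism game has $I=V(G)$, $O=V(H)$, $\lambda(v,w,a,b)=0$ iff ($v=w$ and $a\ne b$) or ($(v,w)\in E(G)$ and $(a,b)\notin E(H)$). $\mathcal I(G,H)$ is the two-sided $*$-ideal generated by $\{e_{v,a}e_{w,b}:\lambda(v,w,a,b)=0\}$, $\mathcal A(G,H)=\mathbb C[\mathbb F(n,m)]/\mathcal I(G,H)$, and $\chi_{alg}(G)=\min\{c:\mathcal A(G,K_c)\neq0\}$. *)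

theory Defs
  imports Complex_Main "HOL-Library.Poly_Mapping"
begin

(* Words in the generators u_v (v a vertex index); the free monoid on nat. *)
datatype word = Word "nat list"

instantiation word :: monoid_add
begin
fun plus_word :: "word \<Rightarrow> word \<Rightarrow> word" where
  "plus_word (Word xs) (Word ys) = Word (xs @ ys)"
definition zero_word :: word where "zero_word = Word []"
instance
proof
  fix a b c :: word
  show "a + b + c = a + (b + c)" by (cases a; cases b; cases c) auto
  show "0 + a = a" by (cases a) (auto simp: zero_word_def)
  show "a + 0 = a" by (cases a) (auto simp: zero_word_def)
qed
end

(* The free unital associative complex algebra on generators x_0, x_1, ... *)
type_synonym falg = "word \<Rightarrow>\<^sub>0 complex"

definition gen_pow :: "nat \<Rightarrow> nat \<Rightarrow> falg" where
  "gen_pow v k = Poly_Mapping.single (Word (replicate k v)) 1"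

(* The involution of C[F(n,m)] lifted to the free algebra: x_v^* = x_v^(m-1) (= x_v^(-1)),
   conjugate-linear and antimultiplicative. *)
fun word_star :: "nat \<Rightarrow> word \<Rightarrow> word" where
  "word_star m (Word ws) = Word (concat (map (\<lambda>v. replicate (m - 1) v) (rev ws)))"

definition falg_star :: "nat \<Rightarrow> falg \<Rightarrow> falg" where
  "falg_star m p = (\<Sum>w\<in>Poly_Mapping.keys p.
       Poly_Mapping.single (word_star m w) (cnj (Poly_Mapping.lookup p w)))"

definition ideal_gen :: "('a::ring_1) set \<Rightarrow> 'a set" where
  "ideal_gen S = {\<Sum>i<(N::nat). (a::nat \<Rightarrow> 'a) i * s i * (b::nat \<Rightarrow> 'a) i | N a s b. \<forall>i<N. s i \<in> S}"

definition omega :: "nat \<Rightarrow> complex" where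
  "omega m = cis (2 * pi / real m)"

definition proj_e :: "nat \<Rightarrow> nat \<Rightarrow> nat \<Rightarrow> falg" where
  "proj_e m v a = (\<Sum>k<m. Poly_Mapping.single (Word (replicate k v))
                              ((1 / of_nat m) * (inverse (omega m) ^ (a * k))))"

(* Graphs on vertex set {0..<n} given by an edge relation *)
(* lambda(v,w,a,b) = 0 for the graph homomorphism game G -> H *)
definition lambda_zero ::
  "(nat \<Rightarrow> nat \<Rightarrow> bool) \<Rightarrow> (nat \<Rightarrow> nat \<Rightarrow> bool) \<Rightarrow> nat \<Rightarrow> nat \<Rightarrow> nat \<Rightarrow> nat \<Rightarrow> bool" where
  "lambda_zero EG EH v w a b \<longleftrightarrow> (v = w \<and> a \<noteq> b) \<or> (EG v w \<and> \<not> EH a b)"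

definition game_gens ::
  "nat \<Rightarrow> (nat \<Rightarrow> nat \<Rightarrow> bool) \<Rightarrow> nat \<Rightarrow> (nat \<Rightarrow> nat \<Rightarrow> bool) \<Rightarrow> falg set" where
  "game_gens n EG m EH = {proj_e m v a * proj_e m w b | v w a b.
       v < n \<and> w < n \<and> a < m \<and> b < m \<and> lambda_zero EG EH v w a b}"

(* Relations presenting C[F(n,m)]: u_v^m = 1 *)
definition group_rels :: "nat \<Rightarrow> nat \<Rightarrow> falg set" where
  "group_rels n m = {gen_pow v m - 1 | v. v < n}"

(* Preimage in the free algebra of the *-ideal I(G,H) of C[F(n,m)] *)
definition game_ideal ::
  "nat \<Rightarrow> (nat \<Rightarrow> nat \<Rightarrow> bool) \<Rightarrow> nat \<Rightarrow> (nat \<Rightarrow> nat \<Rightarrow> bool) \<Rightarrow> falg set" where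
  "game_ideal n EG m EH = ideal_gen (group_rels n m \<union> game_gens n EG m EH
                                     \<union> falg_star m ` game_gens n EG m EH)"

(* A(G,H) = C[F(n,m)] / I(G,H) is nonzero iff 1 is not in the ideal *)
definition game_alg_nonzero ::
  "nat \<Rightarrow> (nat \<Rightarrow> nat \<Rightarrow> bool) \<Rightarrow> nat \<Rightarrow> (nat \<Rightarrow> nat \<Rightarrow> bool) \<Rightarrow> bool" where
  "game_alg_nonzero n EG m EH \<longleftrightarrow> (1::falg) \<notin> game_ideal n EG m EH"

definition complete_edges :: "nat \<Rightarrow> nat \<Rightarrow> bool" where
  "complete_edges a b \<longleftrightarrow> a \<noteq> b"

definition chi_alg :: "nat \<Rightarrow> (nat \<Rightarrow> nat \<Rightarrow> bool) \<Rightarrow> nat" where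
  "chi_alg n EG = (LEAST c. 0 < c \<and> game_alg_nonzero n EG c complete_edges)"

end

theory Submission
  imports Defs "HOL-Library.Numeral_Type"
begin

(* A graph homomorphism f from G to H gives a character u_v |-> omega^(f v) of the free algebra.
   It maps e_{v,a} to [f v = a] and therefore kills I(G,H), so A(K_j,K_j) <> 0.
   Conversely, suppose A(K_n,K_m) <> 0. In this algebra the e_{v,a} are idempotents, with
   e_{v,a} e_{v,b} = 0 for a <> b and e_{v,a} e_{w,a} = 0 for v <> w, and sum_a e_{v,a} = 1.
   Hence the color classes Q_a = sum_v e_{v,a} are m idempotents summing to n in a nonzero
   algebra over the rationals. A short computation shows that one idempotent cannot equal 2,
   two cannot sum to 3 and three cannot sum to 4. This gives A(K_{c+1},K_c) = 0 for c = 1,2,3,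
   and adding vertices only enlarges the ideal. *)

lemma ideal_genI:
  "\<forall>i<N. s i \<in> S \<Longrightarrow> (\<Sum>i<(N::nat). a i * s i * b i) \<in> ideal_gen S"
  unfolding ideal_gen_def by blast

lemma ideal_genE:
  assumes "x \<in> ideal_gen S"
  obtains a s b N where "x = (\<Sum>i<(N::nat). a i * s i * b i)" and "\<forall>i<N. s i \<in> S"
  using assms unfolding ideal_gen_def by blast

lemma ideal_gen_base: "s \<in> S \<Longrightarrow> s \<in> ideal_gen S"
  using ideal_genI[of "Suc 0" "\<lambda>_. s" S "\<lambda>_. 1" "\<lambda>_. 1"] by simp

lemma ideal_gen_zero: "0 \<in> ideal_gen S"
  using ideal_genI[of 0 "\<lambda>_. 0" S "\<lambda>_. 0" "\<lambda>_. 0"] by simp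

lemma ideal_gen_mono: "S \<subseteq> T \<Longrightarrow> ideal_gen S \<subseteq> ideal_gen T"
  unfolding ideal_gen_def by blast

lemma ideal_gen_add:
  assumes "x \<in> ideal_gen S" and "y \<in> ideal_gen S"
  shows "x + y \<in> ideal_gen S"
proof -
  obtain a s b N where x: "x = (\<Sum>i<(N::nat). a i * s i * b i)" and s: "\<forall>i<N. s i \<in> S"
    using assms(1) by (rule ideal_genE)
  obtain c t d M where y: "y = (\<Sum>i<(M::nat). c i * t i * d i)" and t: "\<forall>i<M. t i \<in> S"
    using assms(2) by (rule ideal_genE)
  define join :: "(nat \<Rightarrow> 'a) \<Rightarrow> (nat \<Rightarrow> 'a) \<Rightarrow> nat \<Rightarrow> 'a"
    where "join f g i = (if i < N then f i else g (i - N))" for f g i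
  let ?f = "\<lambda>i. join a c i * join s t i * join b d i"
  have "(\<Sum>i<N + M. ?f i) = (\<Sum>i<N. ?f i) + (\<Sum>i=N..<N + M. ?f i)"
    by (simp add: atLeast0LessThan[symmetric] sum.atLeastLessThan_concat)
  also have "(\<Sum>i=N..<N + M. ?f i) = (\<Sum>i<M. ?f (i + N))"
    using sum.shift_bounds_nat_ivl[of ?f 0 N M] by (simp add: atLeast0LessThan add.commute)
  also have "(\<Sum>i<N. ?f i) + (\<Sum>i<M. ?f (i + N)) = x + y"
    by (simp add: x y join_def)
  finally have "(\<Sum>i<N + M. ?f i) = x + y" .
  moreover have "\<forall>i<N + M. join s t i \<in> S"
    using s t by (simp add: join_def)
  ultimately show ?thesis
    by (metis ideal_genI)
qed

lemma ideal_gen_mult_left: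
  assumes "x \<in> ideal_gen S" shows "r * x \<in> ideal_gen S"
proof -
  obtain a s b N where "x = (\<Sum>i<(N::nat). a i * s i * b i)" and "\<forall>i<N. s i \<in> S"
    using assms by (rule ideal_genE)
  then show ?thesis
    using ideal_genI[of N s S "\<lambda>i. r * a i" b] by (simp add: sum_distrib_left mult.assoc)
qed

lemma ideal_gen_mult_right:
  assumes "x \<in> ideal_gen S" shows "x * r \<in> ideal_gen S"
proof -
  obtain a s b N where "x = (\<Sum>i<(N::nat). a i * s i * b i)" and "\<forall>i<N. s i \<in> S"
    using assms by (rule ideal_genE)
  then show ?thesis
    using ideal_genI[of N s S a "\<lambda>i. b i * r"] by (simp add: sum_distrib_right mult.assoc)
qed

lemma ideal_gen_uminus: "x \<in> ideal_gen S \<Longrightarrow> - x \<in> ideal_gen S"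
  using ideal_gen_mult_left[of x S "- 1"] by simp

locale ring_1_hom =
  fixes \<phi> :: "'a::ring_1 \<Rightarrow> 'b::ring_1"
  assumes map_add: "\<phi> (x + y) = \<phi> x + \<phi> y"
    and map_mult: "\<phi> (x * y) = \<phi> x * \<phi> y"
    and map_one: "\<phi> 1 = 1"
begin

lemma map_zero: "\<phi> 0 = 0"
  using map_add[of 0 0] by simp

lemma map_diff: "\<phi> (x - y) = \<phi> x - \<phi> y"
  using map_add[of "x - y" y] by (simp add: algebra_simps)

lemma map_sum: "\<phi> (sum f A) = (\<Sum>a\<in>A. \<phi> (f a))"
  by (induction A rule: infinite_finite_induct) (simp_all add: map_zero map_add)

lemma map_ideal_gen_eq_0:
  assumes "x \<in> ideal_gen S" and "\<And>s. s \<in> S \<Longrightarrow> \<phi> s = 0"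
  shows "\<phi> x = 0"
  using assms(1) by (rule ideal_genE) (simp add: map_sum map_mult assms(2))

lemma numeral_torsion_free:
  fixes c :: 'a and x :: 'b
  assumes "c * numeral k = 1" and "numeral k * x = 0"
  shows "x = 0"
proof -
  have "\<phi> (of_nat n) = of_nat n" for n
    by (induction n) (simp_all add: map_zero map_add map_one)
  then have "\<phi> c * numeral k = 1"
    using assms(1) by (metis map_mult map_one of_nat_numeral)
  then have "x = \<phi> c * (numeral k * x)"
    by (simp flip: mult.assoc)
  then show ?thesis
    using assms(2) by simp
qed

end

(* simp cannot collect numeral multiples in a noncommutative ring_1; expanding numerals into
   sums of 1 lets the additive cancellation of group_add finish such identities. *)
lemmas numeral_expansion = numeral_Bit0 numeral_Bit1 numeral_One distrib_left distrib_right
  left_diff_distrib right_diff_distrib mult_1_left mult_1_right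

lemma idempotent_ne_2:
  fixes a :: "'r::ring_1"
  assumes "a * a = a"
    and torsion_free: "\<And>k x. numeral k * x = (0::'r) \<Longrightarrow> x = 0"
  shows "a \<noteq> 2"
proof
  assume "a = 2"
  have "2 * (1::'r) = 2 * 2 - 2"
    by (simp only: numeral_expansion; simp add: algebra_simps)
  also have "\<dots> = 0"
    using assms(1) \<open>a = 2\<close> by simp
  finally show False
    using torsion_free[of _ 1] by simp
qed

lemma two_idempotents_sum_ne_3:
  fixes a b :: "'r::ring_1"
  assumes a: "a * a = a" and b: "b * b = b"
    and torsion_free: "\<And>k x. numeral k * x = (0::'r) \<Longrightarrow> x = 0"
  shows "a + b \<noteq> 3"
proof
  assume "a + b = 3"
  then have "0 = (3 - a) * (3 - a) - (3 - a)"
    using b by (metis add_diff_cancel_left' diff_self)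
  also have "\<dots> = 6 - 4 * a"
    using a by (simp only: numeral_expansion; simp add: algebra_simps)
  finally have six: "6 = 4 * a"
    by simp
  have "2 * a = 6 * a - 4 * a"
    by (simp only: numeral_expansion; simp add: algebra_simps)
  also have "\<dots> = 0"
    using a six by (metis mult.assoc diff_self)
  finally have "a = 0"
    by (rule torsion_free)
  then have "6 * (1::'r) = 0"
    using six by simp
  then show False
    using torsion_free[of _ 1] by simp
qed

lemma idempotents_sum_4_commute:
  fixes a b c :: "'r::ring_1"
  assumes a: "a * a = a" and b: "b * b = b" and c: "c * c = c" and sum: "a + b + c = 4"
    and torsion_free: "\<And>k x. numeral k * x = (0::'r) \<Longrightarrow> x = 0"
  shows "a * b = b * a" and "2 * (a * b) = 3 * a"
proof -
  have a_left: "a * (a * x) = a * x" and a_right: "x * a * a = x * a" for x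
    using a by (simp_all flip: mult.assoc add: mult.assoc)
  have "a * (a + b + c) = a * 4" and "(a + b + c) * a = 4 * a"
    using sum by simp_all
  then have ac: "a * c = 3 * a - a * b" and ca: "c * a = 3 * a - b * a"
    using a by (simp_all only: numeral_expansion) (simp_all add: algebra_simps)
  have "a * b + b * a = (a + b) * (a + b) - (a + b)"
    using a b by (simp add: algebra_simps)
  also have "\<dots> = (4 - c) * (4 - c) - (4 - c)"
    using sum by (metis add_diff_cancel_right')
  also have "\<dots> = 12 - 6 * c"
    using c by (simp only: numeral_expansion; simp add: algebra_simps)
  finally have ab_ba: "a * b + b * a = 12 - 6 * c" .
  have "a * b * a = a * (a * b + b * a) - a * b"
    using a_left by (simp add: algebra_simps)
  also have "\<dots> = 12 * a - 6 * (a * c) - a * b"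
    unfolding ab_ba by (simp only: numeral_expansion; simp add: algebra_simps)
  also have "\<dots> = 5 * (a * b) - 6 * a"
    unfolding ac by (simp only: numeral_expansion; simp add: algebra_simps)
  finally have left: "a * b * a = 5 * (a * b) - 6 * a" .
  have "a * b * a = (a * b + b * a) * a - b * a"
    using a_right by (simp add: algebra_simps)
  also have "\<dots> = 12 * a - 6 * (c * a) - b * a"
    unfolding ab_ba by (simp only: numeral_expansion mult.assoc; simp add: algebra_simps)
  also have "\<dots> = 5 * (b * a) - 6 * a"
    unfolding ca by (simp only: numeral_expansion; simp add: algebra_simps)
  finally have right: "a * b * a = 5 * (b * a) - 6 * a" .
  have "5 * (a * b - b * a) = (5 * (a * b) - 6 * a) - (5 * (b * a) - 6 * a)"
    by (simp add: algebra_simps)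
  also have "\<dots> = 0"
    by (simp flip: left right)
  finally have "a * b - b * a = 0"
    by (rule torsion_free)
  then show comm: "a * b = b * a"
    by simp
  have "2 * (2 * (a * b) - 3 * a) = (5 * (a * b) - 6 * a) - a * b"
    by (simp only: numeral_expansion; simp add: algebra_simps)
  also have "\<dots> = a * b * a - a * b"
    by (simp flip: left)
  also have "\<dots> = 0"
    using a_right comm by (metis diff_self)
  finally have "2 * (a * b) - 3 * a = 0"
    by (rule torsion_free)
  then show "2 * (a * b) = 3 * a"
    by simp
qed

lemma three_idempotents_sum_ne_4:
  fixes a b c :: "'r::ring_1"
  assumes a: "a * a = a" and b: "b * b = b" and c: "c * c = c"
    and torsion_free: "\<And>k x. numeral k * x = (0::'r) \<Longrightarrow> x = 0"
  shows "a + b + c \<noteq> 4"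
proof
  assume sum: "a + b + c = 4"
  have "b + a + c = 4" "a + c + b = 4" "c + a + b = 4"
    using sum by (simp_all add: algebra_simps)
  note ab = idempotents_sum_4_commute[OF a b c sum torsion_free]
    and ba = idempotents_sum_4_commute[OF b a c \<open>b + a + c = 4\<close> torsion_free]
    and ac = idempotents_sum_4_commute[OF a c b \<open>a + c + b = 4\<close> torsion_free]
    and ca = idempotents_sum_4_commute[OF c a b \<open>c + a + b = 4\<close> torsion_free]
  have "3 * b = 3 * a"
    using ab ba by (simp flip: ab(2) ba(2))
  moreover have "3 * c = 3 * a"
    using ac ca by (simp flip: ac(2) ca(2))
  ultimately have "b = a" "c = a"
    using torsion_free[of _ "b - a"] torsion_free[of _ "c - a"] by (simp_all add: right_diff_distrib)
  then have three: "3 * a = 4"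
    using sum by (simp only: numeral_expansion; simp add: algebra_simps)
  have "a = 4 * a - 3 * a"
    by (simp only: numeral_expansion; simp add: algebra_simps)
  also have "\<dots> = 0"
    using a three by (metis mult.assoc diff_self)
  finally have "4 * (1::'r) = 0"
    using three by simp
  then show False
    using torsion_free[of _ 1] by simp
qed

fun word_eval :: "(nat \<Rightarrow> complex) \<Rightarrow> word \<Rightarrow> complex" where
  "word_eval \<chi> (Word vs) = (\<Prod>v\<leftarrow>vs. \<chi> v)"

definition falg_eval :: "(nat \<Rightarrow> complex) \<Rightarrow> falg \<Rightarrow> complex" where
  "falg_eval \<chi> p = (\<Sum>w\<in>Poly_Mapping.keys p. Poly_Mapping.lookup p w * word_eval \<chi> w)"

lemma word_eval_plus: "word_eval \<chi> (w + w') = word_eval \<chi> w * word_eval \<chi> w'"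
  by (cases w; cases w') simp_all

lemma word_eval_zero: "word_eval \<chi> 0 = 1"
  by (simp add: zero_word_def)

lemma falg_eval_keys_superset:
  assumes "finite S" and "Poly_Mapping.keys p \<subseteq> S"
  shows "falg_eval \<chi> p = (\<Sum>w\<in>S. Poly_Mapping.lookup p w * word_eval \<chi> w)"
  unfolding falg_eval_def
  by (rule sum.mono_neutral_left) (use assms in \<open>auto simp: in_keys_iff\<close>)

lemma falg_eval_add: "falg_eval \<chi> (p + q) = falg_eval \<chi> p + falg_eval \<chi> q"
proof -
  let ?S = "Poly_Mapping.keys p \<union> Poly_Mapping.keys q"
  have "falg_eval \<chi> (p + q) = (\<Sum>w\<in>?S. Poly_Mapping.lookup (p + q) w * word_eval \<chi> w)"
    by (rule falg_eval_keys_superset) (auto simp: keys_add)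
  also have "\<dots> = falg_eval \<chi> p + falg_eval \<chi> q"
    by (simp add: falg_eval_keys_superset[of ?S] lookup_add distrib_right sum.distrib)
  finally show ?thesis .
qed

lemma falg_eval_sum: "falg_eval \<chi> (sum f A) = (\<Sum>a\<in>A. falg_eval \<chi> (f a))"
  by (induction A rule: infinite_finite_induct) (simp_all add: falg_eval_add falg_eval_def[of _ 0])

lemma falg_eval_single: "falg_eval \<chi> (Poly_Mapping.single w c) = c * word_eval \<chi> w"
  by (cases "c = 0") (simp_all add: falg_eval_def)

lemma falg_eval_single_replicate:
  "falg_eval \<chi> (Poly_Mapping.single (Word (replicate k v)) c) = c * \<chi> v ^ k"
  by (simp add: falg_eval_single)

lemma poly_mapping_sum_single:
  "p = (\<Sum>w\<in>Poly_Mapping.keys p. Poly_Mapping.single w (Poly_Mapping.lookup p w))"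
  by (rule poly_mapping_eqI)
    (simp add: lookup_sum lookup_single when_def in_keys_iff sum.delta'[where S = "Poly_Mapping.keys p"])

lemma falg_eval_mult: "falg_eval \<chi> (p * q) = falg_eval \<chi> p * falg_eval \<chi> q"
proof -
  have "p * q = (\<Sum>w\<in>Poly_Mapping.keys p. \<Sum>w'\<in>Poly_Mapping.keys q.
      Poly_Mapping.single w (Poly_Mapping.lookup p w) * Poly_Mapping.single w' (Poly_Mapping.lookup q w'))"
    by (subst poly_mapping_sum_single[of p], subst poly_mapping_sum_single[of q])
      (simp add: sum_distrib_left sum_distrib_right sum.swap[of _ "Poly_Mapping.keys q"])
  then have "falg_eval \<chi> (p * q) = (\<Sum>w\<in>Poly_Mapping.keys p. \<Sum>w'\<in>Poly_Mapping.keys q.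
      (Poly_Mapping.lookup p w * word_eval \<chi> w) * (Poly_Mapping.lookup q w' * word_eval \<chi> w'))"
    by (simp add: falg_eval_sum mult_single falg_eval_single word_eval_plus mult_ac)
  also have "\<dots> = falg_eval \<chi> p * falg_eval \<chi> q"
    by (simp add: falg_eval_def sum_product)
  finally show ?thesis .
qed

interpretation falg_eval: ring_1_hom "falg_eval \<chi>"
  by unfold_locales
    (simp_all add: falg_eval_add falg_eval_mult falg_eval_single word_eval_zero flip: single_one)

lemma falg_eval_star:
  assumes "\<And>v. \<chi> v ^ (m - 1) = cnj (\<chi> v)"
  shows "falg_eval \<chi> (falg_star m p) = cnj (falg_eval \<chi> p)"
proof -
  have "word_eval \<chi> (word_star m (Word vs)) = cnj (word_eval \<chi> (Word vs))" for vs
    using assms by (induction vs) (simp_all add: mult.commute)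
  then have "word_eval \<chi> (word_star m w) = cnj (word_eval \<chi> w)" for w
    by (cases w) simp
  then show ?thesis
    unfolding falg_star_def falg_eval.map_sum falg_eval_single by (simp add: falg_eval_def)
qed

lemma omega_power: "omega m ^ k = cis (2 * pi * real k / real m)"
  by (simp add: omega_def DeMoivre mult_ac)

lemma omega_power_order: "0 < m \<Longrightarrow> omega m ^ m = 1"
  by (simp add: omega_power)

lemma omega_power_root_of_unity: "0 < m \<Longrightarrow> (omega m ^ k) ^ m = 1"
  by (metis mult.commute omega_power_order power_mult power_one)

lemma omega_power_eq_iff:
  assumes "k < m" and "l < m"
  shows "omega m ^ k = omega m ^ l \<longleftrightarrow> k = l"
  using bij_betw_imp_inj_on[OF bij_betw_roots_unity[of m]] assms
  by (auto simp: omega_power inj_on_def)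

lemma root_of_unity_power_pred:
  fixes z :: complex
  assumes "z ^ m = 1" and "0 < m"
  shows "z ^ (m - 1) = cnj z"
proof -
  have "norm z ^ m = 1"
    using assms(1) by (metis norm_one norm_power)
  then have "norm z = 1"
    using assms(2) power_eq_1_iff by fastforce
  then have "z * cnj z = 1"
    using complex_norm_square[of z] by simp
  then have "z ^ (m - 1) = z ^ (m - 1) * z * cnj z"
    by (simp add: mult.assoc)
  also have "\<dots> = cnj z"
    using assms by (simp flip: power_Suc2)
  finally show ?thesis .
qed

lemma sum_powers_root_of_unity:
  fixes z :: complex
  assumes "z ^ m = 1"
  shows "(\<Sum>k<m. z ^ k) = (if z = 1 then of_nat m else 0)"
  using assms by (simp add: sum_gp_strict)

lemma falg_eval_proj_e:
  assumes "0 < m" and "\<chi> v ^ m = 1"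
  shows "falg_eval \<chi> (proj_e m v a) = (if \<chi> v = omega m ^ a then 1 else 0)"
proof -
  define z where "z = inverse (omega m) ^ a * \<chi> v"
  have "falg_eval \<chi> (proj_e m v a) = (\<Sum>k<m. z ^ k) / of_nat m"
    by (simp add: proj_e_def falg_eval.map_sum falg_eval_single_replicate z_def power_mult_distrib
        sum_divide_distrib power_mult)
  moreover have "z ^ m = 1"
    using assms by (simp add: z_def power_mult_distrib power_inverse omega_power_root_of_unity)
  moreover have "z = 1 \<longleftrightarrow> \<chi> v = omega m ^ a"
    by (auto simp: z_def field_simps omega_def)
  ultimately show ?thesis
    using assms(1) by (simp add: sum_powers_root_of_unity)
qed

lemma game_alg_nonzero_if_hom:
  assumes "0 < m"
    and into: "\<And>v. v < n \<Longrightarrow> f v < m"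
    and hom: "\<And>v w. v < n \<Longrightarrow> w < n \<Longrightarrow> EG v w \<Longrightarrow> EH (f v) (f w)"
  shows "game_alg_nonzero n EG m EH"
proof -
  define \<chi> where "\<chi> v = omega m ^ f v" for v
  have root: "\<chi> v ^ m = 1" for v
    using assms(1) by (simp add: \<chi>_def omega_power_root_of_unity)
  have eval_e: "falg_eval \<chi> (proj_e m v a) = (if f v = a then 1 else 0)"
    if "v < n" and "a < m" for v a
  proof -
    have "\<chi> v = omega m ^ a \<longleftrightarrow> f v = a"
      using omega_power_eq_iff into that by (simp add: \<chi>_def)
    then show ?thesis
      using falg_eval_proj_e[OF assms(1) root] by simp
  qed
  have gens: "falg_eval \<chi> s = 0" if "s \<in> game_gens n EG m EH" for s
    using that hom by (auto simp: game_gens_def lambda_zero_def falg_eval.map_mult eval_e)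
  have vanish: "falg_eval \<chi> s = 0"
    if "s \<in> group_rels n m \<union> game_gens n EG m EH \<union> falg_star m ` game_gens n EG m EH" for s
    using that gens root falg_eval_star[OF root_of_unity_power_pred[OF root assms(1)]]
    by (auto simp: group_rels_def gen_pow_def falg_eval.map_diff falg_eval.map_one
        falg_eval_single_replicate)
  have "falg_eval \<chi> x = 0" if "x \<in> game_ideal n EG m EH" for x
    using falg_eval.map_ideal_gen_eq_0 that vanish unfolding game_ideal_def by blast
  then show ?thesis
    unfolding game_alg_nonzero_def using falg_eval.map_one by force
qed

lemma single_sum: "Poly_Mapping.single k (sum f A) = (\<Sum>a\<in>A. Poly_Mapping.single k (f a))"
  by (induction A rule: infinite_finite_induct) (simp_all add: single_add)

lemma proj_e_sum:
  assumes "0 < m"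
  shows "(\<Sum>a<m. proj_e m v a) = 1"
proof -
  have coeff: "(\<Sum>a<m. inverse (omega m) ^ (a * k) / of_nat m) = (if k = 0 then 1 else 0)"
    if "k < m" for k
  proof -
    define z where "z = inverse (omega m) ^ k"
    have "z ^ m = 1"
      using assms by (simp add: z_def power_inverse omega_power_root_of_unity)
    moreover have "z = 1 \<longleftrightarrow> k = 0"
      using omega_power_eq_iff[of k m 0] that assms by (auto simp: z_def power_inverse)
    ultimately show ?thesis
      using assms by (simp add: z_def sum_powers_root_of_unity mult.commute[of _ k] power_mult
          flip: sum_divide_distrib)
  qed
  have "(\<Sum>a<m. proj_e m v a) = (\<Sum>k<m. Poly_Mapping.single (Word (replicate k v))
      (\<Sum>a<m. 1 / of_nat m * inverse (omega m) ^ (a * k)))"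
    unfolding proj_e_def single_sum by (rule sum.swap)
  also have "\<dots> = (\<Sum>k<m. if k = 0 then Poly_Mapping.single (Word []) 1 else 0)"
    by (rule sum.cong) (simp_all add: coeff)
  also have "\<dots> = 1"
    using assms by (simp flip: zero_word_def)
  finally show ?thesis .
qed

lemma column_sum_idempotent:
  fixes p :: "nat \<Rightarrow> nat \<Rightarrow> 'r::ring_1"
  assumes row_sum: "\<And>v. v < n \<Longrightarrow> (\<Sum>b<m. p v b) = 1"
    and row_orth:
      "\<And>v b c. v < n \<Longrightarrow> b < m \<Longrightarrow> c < m \<Longrightarrow> b \<noteq> c \<Longrightarrow> p v b * p v c = 0"
    and column_orth: "\<And>v w. v < n \<Longrightarrow> w < n \<Longrightarrow> v \<noteq> w \<Longrightarrow> p v a * p w a = 0"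
    and "a < m"
  shows "(\<Sum>v<n. p v a) * (\<Sum>v<n. p v a) = (\<Sum>v<n. p v a)"
proof -
  have idem: "p v a * p v a = p v a" if "v < n" for v
  proof -
    have "p v a = (\<Sum>b<m. p v a * p v b)"
      using row_sum that by (simp flip: sum_distrib_left)
    also have "\<dots> = p v a * p v a"
      using row_orth that \<open>a < m\<close> by (subst sum.mono_neutral_right[where S = "{a}"]) auto
    finally show ?thesis ..
  qed
  have "(\<Sum>v<n. p v a) * (\<Sum>v<n. p v a) = (\<Sum>v<n. \<Sum>w<n. p v a * p w a)"
    by (simp add: sum_product)
  also have "\<dots> = (\<Sum>v<n. p v a * p v a)"
    using column_orth by (intro sum.cong refl, subst sum.mono_neutral_right[where S = "{_}"]) auto
  also have "\<dots> = (\<Sum>v<n. p v a)"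
    using idem by simp
  finally show ?thesis .
qed

definition color_class :: "(falg \<Rightarrow> 'r::ring_1) \<Rightarrow> nat \<Rightarrow> nat \<Rightarrow> nat \<Rightarrow> 'r" where
  "color_class \<phi> n m a = (\<Sum>v<n. \<phi> (proj_e m v a))"

lemma complete_game_color_classes:
  fixes \<phi> :: "falg \<Rightarrow> 'r::ring_1"
  assumes "ring_1_hom \<phi>" and "0 < m"
    and ker: "\<And>x. x \<in> game_ideal n complete_edges m complete_edges \<Longrightarrow> \<phi> x = 0"
  shows "\<And>a. a < m \<Longrightarrow> color_class \<phi> n m a * color_class \<phi> n m a = color_class \<phi> n m a"
    and "(\<Sum>a<m. color_class \<phi> n m a) = of_nat n"
proof -
  interpret ring_1_hom \<phi> by fact
  have gen: "\<phi> (proj_e m v a) * \<phi> (proj_e m w b) = 0"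
    if "v < n" "w < n" "a < m" "b < m" "lambda_zero complete_edges complete_edges v w a b"
    for v w a b
  proof -
    have "proj_e m v a * proj_e m w b \<in> game_ideal n complete_edges m complete_edges"
      unfolding game_ideal_def game_gens_def using that by (intro ideal_gen_base) blast
    then show ?thesis
      using ker by (simp flip: map_mult)
  qed
  have row_sum: "(\<Sum>a<m. \<phi> (proj_e m v a)) = 1" for v
    using proj_e_sum[OF \<open>0 < m\<close>] by (metis map_one map_sum)
  show "color_class \<phi> n m a * color_class \<phi> n m a = color_class \<phi> n m a" if "a < m" for a
    unfolding color_class_def using row_sum gen that
    by (intro column_sum_idempotent) (auto simp: lambda_zero_def complete_edges_def)
  have "(\<Sum>a<m. color_class \<phi> n m a) = (\<Sum>v<n. \<Sum>a<m. \<phi> (proj_e m v a))"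
    unfolding color_class_def by (rule sum.swap)
  then show "(\<Sum>a<m. color_class \<phi> n m a) = of_nat n"
    by (simp add: row_sum)
qed

(* Dividing by an improper ideal would give the zero ring, which is not a ring_1, so in that case
   we divide by {0} instead; only the case A(K_n,K_m) <> 0 is ever used. *)
definition coloring_kernel :: "nat \<Rightarrow> nat \<Rightarrow> falg set" where
  "coloring_kernel n m = (if game_alg_nonzero n complete_edges m complete_edges
     then game_ideal n complete_edges m complete_edges else {0})"

lemma coloring_kernel_zero: "0 \<in> coloring_kernel n m"
  by (simp add: coloring_kernel_def game_ideal_def ideal_gen_zero)

lemma coloring_kernel_add:
  "x \<in> coloring_kernel n m \<Longrightarrow> y \<in> coloring_kernel n m \<Longrightarrow> x + y \<in> coloring_kernel n m"
  by (auto simp: coloring_kernel_def game_ideal_def ideal_gen_add split: if_splits)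

lemma coloring_kernel_uminus: "x \<in> coloring_kernel n m \<Longrightarrow> - x \<in> coloring_kernel n m"
  by (auto simp: coloring_kernel_def game_ideal_def ideal_gen_uminus split: if_splits)

lemma coloring_kernel_mult_left: "x \<in> coloring_kernel n m \<Longrightarrow> r * x \<in> coloring_kernel n m"
  by (auto simp: coloring_kernel_def game_ideal_def ideal_gen_mult_left split: if_splits)

lemma coloring_kernel_mult_right: "x \<in> coloring_kernel n m \<Longrightarrow> x * r \<in> coloring_kernel n m"
  by (auto simp: coloring_kernel_def game_ideal_def ideal_gen_mult_right split: if_splits)

lemma one_notin_coloring_kernel: "1 \<notin> coloring_kernel n m"
  by (simp add: coloring_kernel_def game_alg_nonzero_def)

lemma coloring_kernel_diff:
  "x \<in> coloring_kernel n m \<Longrightarrow> y \<in> coloring_kernel n m \<Longrightarrow> x - y \<in> coloring_kernel n m"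
  using coloring_kernel_add[of x n m "- y"] coloring_kernel_uminus[of y n m] by simp

(* A(K_n,K_m) for n = CARD('n) and m = CARD('m); encoding n and m as types lets the quotient be
   an instance of ring_1. *)
quotient_type ('n, 'm) coloring_algebra =
  falg / "\<lambda>x y. x - y \<in> coloring_kernel CARD('n) CARD('m)"
proof (rule equivpI)
  show "reflp (\<lambda>x y. x - y \<in> coloring_kernel CARD('n) CARD('m))"
    by (rule reflpI) (simp add: coloring_kernel_zero)
  show "symp (\<lambda>x y. x - y \<in> coloring_kernel CARD('n) CARD('m))"
    by (rule sympI) (drule coloring_kernel_uminus, simp)
  show "transp (\<lambda>x y. x - y \<in> coloring_kernel CARD('n) CARD('m))"
    by (rule transpI) (drule (1) coloring_kernel_add, simp)
qed

instantiation coloring_algebra :: (type, type) ring_1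
begin

lift_definition zero_coloring_algebra :: "('n, 'm) coloring_algebra" is 0 .

lift_definition one_coloring_algebra :: "('n, 'm) coloring_algebra" is 1 .

lift_definition plus_coloring_algebra ::
  "('n, 'm) coloring_algebra \<Rightarrow> ('n, 'm) coloring_algebra \<Rightarrow> ('n, 'm) coloring_algebra" is plus
  by (drule (1) coloring_kernel_add) (simp add: algebra_simps)

lift_definition uminus_coloring_algebra ::
  "('n, 'm) coloring_algebra \<Rightarrow> ('n, 'm) coloring_algebra" is uminus
  by (drule coloring_kernel_uminus) (simp add: algebra_simps)

lift_definition minus_coloring_algebra ::
  "('n, 'm) coloring_algebra \<Rightarrow> ('n, 'm) coloring_algebra \<Rightarrow> ('n, 'm) coloring_algebra" is minus
  by (drule (1) coloring_kernel_diff) (simp add: algebra_simps)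

lift_definition times_coloring_algebra ::
  "('n, 'm) coloring_algebra \<Rightarrow> ('n, 'm) coloring_algebra \<Rightarrow> ('n, 'm) coloring_algebra" is times
proof -
  fix x x' y y' :: falg
  assume "x - x' \<in> coloring_kernel CARD('n) CARD('m)"
    and "y - y' \<in> coloring_kernel CARD('n) CARD('m)"
  then have "(x - x') * y + x' * (y - y') \<in> coloring_kernel CARD('n) CARD('m)"
    by (intro coloring_kernel_add coloring_kernel_mult_left coloring_kernel_mult_right)
  then show "x * y - x' * y' \<in> coloring_kernel CARD('n) CARD('m)"
    by (simp add: algebra_simps)
qed

instance
proof
  fix a b c :: "('n, 'm) coloring_algebra"
  show "a + b + c = a + (b + c)" by transfer (simp add: algebra_simps coloring_kernel_zero)
  show "a + b = b + a" by transfer (simp add: algebra_simps coloring_kernel_zero)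
  show "0 + a = a" by transfer (simp add: coloring_kernel_zero)
  show "- a + a = 0" by transfer (simp add: coloring_kernel_zero)
  show "a - b = a + - b" by transfer (simp add: coloring_kernel_zero)
  show "a * b * c = a * (b * c)" by transfer (simp add: algebra_simps coloring_kernel_zero)
  show "(a + b) * c = a * c + b * c" by transfer (simp add: algebra_simps coloring_kernel_zero)
  show "a * (b + c) = a * b + a * c" by transfer (simp add: algebra_simps coloring_kernel_zero)
  show "1 * a = a" by transfer (simp add: coloring_kernel_zero)
  show "a * 1 = a" by transfer (simp add: coloring_kernel_zero)
  show "0 \<noteq> (1 :: ('n, 'm) coloring_algebra)"
    by transfer (metis coloring_kernel_uminus one_notin_coloring_kernel minus_diff_eq diff_zero)
qed

end

lemma ring_1_hom_abs_coloring_algebra: "ring_1_hom abs_coloring_algebra"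
  by unfold_locales (simp_all add: plus_coloring_algebra.abs_eq times_coloring_algebra.abs_eq
      one_coloring_algebra.abs_eq)

lemma abs_coloring_algebra_game_ideal:
  assumes "game_alg_nonzero CARD('n) complete_edges CARD('m) complete_edges"
    and "x \<in> game_ideal CARD('n) complete_edges CARD('m) complete_edges"
  shows "(abs_coloring_algebra x :: ('n, 'm) coloring_algebra) = 0"
  using assms by (simp add: zero_coloring_algebra.abs_eq coloring_algebra.abs_eq_iff coloring_kernel_def)

lemma coloring_algebra_torsion_free: "numeral k * x = 0 \<Longrightarrow> x = (0 :: ('n, 'm) coloring_algebra)"
proof (rule ring_1_hom.numeral_torsion_free[OF ring_1_hom_abs_coloring_algebra])
  show "Poly_Mapping.single 0 (1 / numeral k) * numeral k = (1 :: falg)"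
    by (simp add: mult_single flip: single_numeral)
qed

lemma coloring_algebra_color_classes:
  assumes "game_alg_nonzero n complete_edges m complete_edges" and "0 < m"
    and "CARD('n) = n" and "CARD('m) = m"
  obtains Q :: "nat \<Rightarrow> ('n, 'm) coloring_algebra"
  where "\<And>a. a < m \<Longrightarrow> Q a * Q a = Q a" and "(\<Sum>a<m. Q a) = of_nat n"
proof -
  have ker: "(abs_coloring_algebra x :: ('n, 'm) coloring_algebra) = 0"
    if "x \<in> game_ideal n complete_edges m complete_edges" for x
    using abs_coloring_algebra_game_ideal[where 'n = 'n and 'm = 'm] that assms by simp
  show thesis
    using complete_game_color_classes[OF ring_1_hom_abs_coloring_algebra \<open>0 < m\<close> ker]
    by (rule that)
qed

lemma not_game_alg_nonzero_K2_K1: "\<not> game_alg_nonzero 2 complete_edges 1 complete_edges"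
proof
  assume "game_alg_nonzero 2 complete_edges 1 complete_edges"
  then obtain Q :: "nat \<Rightarrow> (2, 1) coloring_algebra"
    where "\<And>a. a < 1 \<Longrightarrow> Q a * Q a = Q a" and "(\<Sum>a<1. Q a) = of_nat 2"
    by (rule coloring_algebra_color_classes[where 'n = 2 and 'm = 1]) auto
  then have "Q 0 * Q 0 = Q 0" and "Q 0 = 2"
    by simp_all
  then show False
    using idempotent_ne_2 coloring_algebra_torsion_free by blast
qed

lemma not_game_alg_nonzero_K3_K2: "\<not> game_alg_nonzero 3 complete_edges 2 complete_edges"
proof
  assume "game_alg_nonzero 3 complete_edges 2 complete_edges"
  then obtain Q :: "nat \<Rightarrow> (3, 2) coloring_algebra"
    where "\<And>a. a < 2 \<Longrightarrow> Q a * Q a = Q a" and "(\<Sum>a<2. Q a) = of_nat 3"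
    by (rule coloring_algebra_color_classes[where 'n = 3 and 'm = 2]) auto
  then have "Q 0 * Q 0 = Q 0" and "Q 1 * Q 1 = Q 1" and "Q 0 + Q 1 = 3"
    by (simp_all add: eval_nat_numeral)
  then show False
    using two_idempotents_sum_ne_3 coloring_algebra_torsion_free by blast
qed

lemma not_game_alg_nonzero_K4_K3: "\<not> game_alg_nonzero 4 complete_edges 3 complete_edges"
proof
  assume "game_alg_nonzero 4 complete_edges 3 complete_edges"
  then obtain Q :: "nat \<Rightarrow> (4, 3) coloring_algebra"
    where "\<And>a. a < 3 \<Longrightarrow> Q a * Q a = Q a" and "(\<Sum>a<3. Q a) = of_nat 4"
    by (rule coloring_algebra_color_classes[where 'n = 4 and 'm = 3]) auto
  then have "Q 0 * Q 0 = Q 0" and "Q 1 * Q 1 = Q 1" and "Q 2 * Q 2 = Q 2" and "Q 0 + Q 1 + Q 2 = 4"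
    by (simp_all add: eval_nat_numeral)
  then show False
    using three_idempotents_sum_ne_4 coloring_algebra_torsion_free by blast
qed

lemma game_ideal_mono_vertices:
  assumes "n \<le> n'"
  shows "game_ideal n EG m EH \<subseteq> game_ideal n' EG m EH"
proof -
  have "group_rels n m \<subseteq> group_rels n' m" and "game_gens n EG m EH \<subseteq> game_gens n' EG m EH"
    using assms unfolding group_rels_def game_gens_def by fastforce+
  then show ?thesis
    unfolding game_ideal_def by (intro ideal_gen_mono) blast
qed

lemma game_alg_nonzero_mono_vertices:
  "game_alg_nonzero n' EG m EH \<Longrightarrow> n \<le> n' \<Longrightarrow> game_alg_nonzero n EG m EH"
  using game_ideal_mono_vertices unfolding game_alg_nonzero_def by blast

theorem mainTheorem4:
  shows "\<forall>j\<in>{2, 3, 4::nat}. chi_alg j complete_edges = j"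
proof
  fix j :: nat
  assume j: "j \<in> {2, 3, 4}"
  have "game_alg_nonzero j complete_edges j complete_edges"
    using j by (intro game_alg_nonzero_if_hom[where f = id]) (auto simp: complete_edges_def)
  moreover have "\<not> game_alg_nonzero j complete_edges c complete_edges" if "0 < c" and "c < j" for c
  proof -
    have "c = 1 \<and> 2 \<le> j \<or> c = 2 \<and> 3 \<le> j \<or> c = 3 \<and> 4 \<le> j"
      using j that by auto
    then show ?thesis
      using not_game_alg_nonzero_K2_K1 not_game_alg_nonzero_K3_K2 not_game_alg_nonzero_K4_K3
        game_alg_nonzero_mono_vertices by blast
  qed
  ultimately show "chi_alg j complete_edges = j"
    unfolding chi_alg_def using j by (intro Least_equality) (auto simp: not_less[symmetric])
qed

end
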